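(* Let $G=(V,E)$ be a finite connected undirected unweighted graph, let $\lambda\in[0,1]$, $r>0$, and $S\subseteq V$. If $r\ge 1$ then $\mathrm{fp}^{\lambda,r}_G(S)\ge \mathrm{fp}^{\lambda,1}_G(S)$, and if $r\le 1$ then $\mathrm{fp}^{\lambda,r}_G(S)\le \mathrm{fp}^{\lambda,1}_G(S)$.
   Context: The $\lambda$-mixed Moran process on a connected graph $G=(V,E)$ with $n=|V|\ge 2$ vertices: each vertex hosts either a resident (fitness $1$) or a mutant (fitness $r>0$); the state is the set $S_t\subseteq V$ of mutant vertices. $N(u)$ is the neighbor set of $u$. At each step, independently: with probability $\lambda$ a Birth-death step occurs (a vertex $u$ is chosen with probability proportional to its fitness among all vertices, then a uniformly random neighbor $v\in N(u)$ takes the type of $u$); with probability $1-\lambda$ a death-Birth step occurs (a uniformly random vertex $v$ dies, then a neighbor $u\in N(v)$ is chosen with probability proportional to fitness among $N(v)$, and $v$ takes the type of $u$). $\mathrm{fp}^{\lambda,r}_G(S)$ is the probability that, starting from $S_0=S$, the process reaches $S_t=V$. *)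

theory Defs
  imports Complex_Main
begin

definition connected_graph :: "'a set \<Rightarrow> ('a \<Rightarrow> 'a \<Rightarrow> bool) \<Rightarrow> bool" where
  "connected_graph V E \<longleftrightarrow> finite V \<and> card V \<ge> 2
     \<and> (\<forall>u v. E u v \<longrightarrow> u \<in> V \<and> v \<in> V)
     \<and> (\<forall>u v. E u v \<longrightarrow> E v u)
     \<and> (\<forall>u. \<not> E u u)
     \<and> (\<forall>u\<in>V. \<forall>v\<in>V. E\<^sup>*\<^sup>* u v)"

definition nbrs :: "'a set \<Rightarrow> ('a \<Rightarrow> 'a \<Rightarrow> bool) \<Rightarrow> 'a \<Rightarrow> 'a set" where
  "nbrs V E u = {v \<in> V. E u v}"

definition fit :: "real \<Rightarrow> 'a set \<Rightarrow> 'a \<Rightarrow> real" where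
  "fit r S u = (if u \<in> S then r else 1)"

text \<open>New mutant set after vertex v takes the type of vertex u.\<close>
definition moran_upd :: "'a set \<Rightarrow> 'a \<Rightarrow> 'a \<Rightarrow> 'a set" where
  "moran_upd S u v = (if u \<in> S then insert v S else S - {v})"

text \<open>Expected value of f after one step of the lambda-mixed Moran process from state S.\<close>
definition moran_step :: "'a set \<Rightarrow> ('a \<Rightarrow> 'a \<Rightarrow> bool) \<Rightarrow> real \<Rightarrow> real \<Rightarrow> ('a set \<Rightarrow> real) \<Rightarrow> 'a set \<Rightarrow> real" where
  "moran_step V E lam r f S =
     lam * (\<Sum>u\<in>V. fit r S u / (\<Sum>w\<in>V. fit r S w) *
              (\<Sum>v\<in>nbrs V E u. f (moran_upd S u v) / real (card (nbrs V E u))))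
   + (1 - lam) * (\<Sum>v\<in>V. (1 / real (card V)) *
              (\<Sum>u\<in>nbrs V E v. fit r S u / (\<Sum>w\<in>nbrs V E v. fit r S w) * f (moran_upd S u v)))"

text \<open>Probability that, starting from S, the process reaches the all-mutant state V within n steps.\<close>
fun hit_within :: "'a set \<Rightarrow> ('a \<Rightarrow> 'a \<Rightarrow> bool) \<Rightarrow> real \<Rightarrow> real \<Rightarrow> nat \<Rightarrow> 'a set \<Rightarrow> real" where
  "hit_within V E lam r 0 S = (if S = V then 1 else 0)"
| "hit_within V E lam r (Suc n) S =
     (if S = V then 1 else moran_step V E lam r (hit_within V E lam r n) S)"

definition fp :: "'a set \<Rightarrow> ('a \<Rightarrow> 'a \<Rightarrow> bool) \<Rightarrow> real \<Rightarrow> real \<Rightarrow> 'a set \<Rightarrow> real" where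
  "fp V E lam r S = lim (\<lambda>n. hit_within V E lam r n S)"

end

theory Submission imports Defs begin

(* Both fixation probabilities are limits of the probabilities h_r^n(S) of fixation within n
   steps, obtained by iterating the one-step expectation operator P_r, which is positive and
   fixes constants.  In the neutral process (r = 1) the reproducing vertex is chosen
   independently of the state, so h_1^n is monotone in the mutant set.  For a monotone g,
   raising r moves selection weight from residents to mutants, whose offspring lead to larger
   states, so by Chebyshev's sum inequality P_r g >= P_1 g when r >= 1.  Hence by induction
   h_r^(n+1) = P_r h_r^n >= P_r h_1^n >= P_1 h_1^n = h_1^(n+1); for r <= 1 every inequality
   reverses, which is handled uniformly by a sign s with s (r - 1) >= 0. *)

lemma Chebyshev_sum_similarly_ordered:
  fixes f y :: "'b \<Rightarrow> 'a::linordered_idom"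
  assumes "finite N" and "\<And>u w. u \<in> N \<Longrightarrow> w \<in> N \<Longrightarrow> 0 \<le> (f u - f w) * (y u - y w)"
  shows "sum f N * sum y N \<le> of_nat (card N) * (\<Sum>u\<in>N. f u * y u)"
proof -
  have "2 * (of_nat (card N) * (\<Sum>u\<in>N. f u * y u) - sum f N * sum y N)
      = (\<Sum>u\<in>N. \<Sum>w\<in>N. (f u - f w) * (y u - y w))"
    by (simp only: one_add_one[symmetric] algebra_simps)
      (simp add: algebra_simps sum_subtractf sum.distrib sum.swap[of "\<lambda>u w. f u * y w"]
        sum_distrib_left sum_distrib_right sum_product)
  also have "\<dots> \<ge> 0"
    using assms(2) by (intro sum_nonneg) auto
  finally show ?thesis by simp
qed

lemma mean_lower_bound:
  fixes x :: "'a \<Rightarrow> real"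
  assumes "finite N" "N \<noteq> {}" "\<And>v. v \<in> N \<Longrightarrow> c \<le> x v"
  shows "c \<le> (\<Sum>v\<in>N. x v / real (card N))"
  using sum_bounded_below[of N c x] assms
  by (simp add: sum_divide_distrib[symmetric] card_gt_0_iff field_simps)

lemma mean_upper_bound:
  fixes x :: "'a \<Rightarrow> real"
  assumes "finite N" "N \<noteq> {}" "\<And>v. v \<in> N \<Longrightarrow> x v \<le> c"
  shows "(\<Sum>v\<in>N. x v / real (card N)) \<le> c"
  using sum_bounded_above[of N x c] assms
  by (simp add: sum_divide_distrib[symmetric] card_gt_0_iff field_simps)

lemma fit_pos: "0 < r \<Longrightarrow> 0 < fit r S u"
  by (simp add: fit_def)

lemma fit_neutral [simp]: "fit 1 S u = 1"
  by (simp add: fit_def)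

lemma fit_sum_pos: "0 < r \<Longrightarrow> finite N \<Longrightarrow> N \<noteq> {} \<Longrightarrow> 0 < (\<Sum>w\<in>N. fit r S w)"
  by (intro sum_pos) (auto intro: fit_pos)

lemma fitness_weighted_average_compare:
  fixes y :: "'a \<Rightarrow> real"
  assumes N: "finite N" "N \<noteq> {}" and r: "0 < r" "0 \<le> s * (r - 1)"
    and sorted: "\<And>u w. u \<in> N \<inter> S \<Longrightarrow> w \<in> N - S \<Longrightarrow> y w \<le> y u"
  shows "0 \<le> s * ((\<Sum>u\<in>N. fit r S u / (\<Sum>w\<in>N. fit r S w) * y u)
                 - (\<Sum>u\<in>N. fit 1 S u / (\<Sum>w\<in>N. fit 1 S w) * y u))"
proof -
  define W where "W = (\<Sum>w\<in>N. fit r S w)"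
  define n where "n = real (card N)"
  have W: "0 < W" unfolding W_def using N r by (simp add: fit_sum_pos)
  have n: "0 < n" unfolding n_def using N by (simp add: card_gt_0_iff)
  have ordered: "0 \<le> (fit r S u - fit r S w) * (s * y u - s * y w)" if "u \<in> N" "w \<in> N" for u w
  proof -
    have "0 \<le> (of_bool (u \<in> S) - of_bool (w \<in> S)) * (y u - y w)"
      using sorted[of u w] sorted[of w u] that by auto
    moreover have "(fit r S u - fit r S w) * (s * y u - s * y w)
        = s * (r - 1) * ((of_bool (u \<in> S) - of_bool (w \<in> S)) * (y u - y w))"
      by (simp add: fit_def algebra_simps)
    ultimately show ?thesis using r(2) by simp
  qed
  have "W * (\<Sum>u\<in>N. s * y u) \<le> n * (\<Sum>u\<in>N. fit r S u * (s * y u))"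
    unfolding W_def n_def using N(1) ordered by (rule Chebyshev_sum_similarly_ordered)
  moreover have "s * ((\<Sum>u\<in>N. fit r S u / W * y u) - (\<Sum>u\<in>N. 1 / n * y u))
     = (n * (\<Sum>u\<in>N. fit r S u * (s * y u)) - W * (\<Sum>u\<in>N. s * y u)) / (W * n)"
    using W n by (simp add: field_simps sum_distrib_left sum_divide_distrib)
  ultimately show ?thesis using W n by (simp add: W_def n_def)
qed

lemma moran_upd_subset: "S \<subseteq> V \<Longrightarrow> v \<in> V \<Longrightarrow> moran_upd S u v \<subseteq> V"
  by (auto simp: moran_upd_def)

lemma moran_upd_mono: "S \<subseteq> T \<Longrightarrow> moran_upd S u v \<subseteq> moran_upd T u v"
  by (auto simp: moran_upd_def)

lemma nbrs_subset: "nbrs V E u \<subseteq> V"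
  by (auto simp: nbrs_def)

lemma moran_step_scaled_diff:
  "moran_step V E lam r (\<lambda>T. s * (f T - g T)) S
     = s * (moran_step V E lam r f S - moran_step V E lam r g S)"
  unfolding moran_step_def
  by (simp only: ring_distribs sum_subtractf diff_divide_distrib sum_distrib_left
      times_divide_eq_right mult_ac)

locale mixed_moran =
  fixes V :: "'a set" and E :: "'a \<Rightarrow> 'a \<Rightarrow> bool" and lam :: real
  assumes graph: "connected_graph V E" and lam_nonneg: "0 \<le> lam" and lam_le_1: "lam \<le> 1"
begin

abbreviation step :: "real \<Rightarrow> ('a set \<Rightarrow> real) \<Rightarrow> 'a set \<Rightarrow> real" where
  "step r \<equiv> moran_step V E lam r"

abbreviation hit :: "real \<Rightarrow> nat \<Rightarrow> 'a set \<Rightarrow> real" where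
  "hit r \<equiv> hit_within V E lam r"

lemma finite_V: "finite V"
  using graph by (simp add: connected_graph_def)

lemma V_nonempty: "V \<noteq> {}"
  using graph by (auto simp: connected_graph_def)

lemma finite_nbrs: "finite (nbrs V E u)"
  using finite_V nbrs_subset by (rule finite_subset[rotated])

lemma nbrs_nonempty:
  assumes u: "u \<in> V"
  shows "nbrs V E u \<noteq> {}"
proof -
  have "card V \<ge> 2" using graph by (simp add: connected_graph_def)
  then obtain v where v: "v \<in> V" "v \<noteq> u"
    using finite_V u by (metis card_le_Suc0_iff_eq not_less_eq_eq numeral_2_eq_2)
  have "E\<^sup>*\<^sup>* u v" using graph u v by (simp add: connected_graph_def)
  then obtain w where "E u w" using v(2) by (metis converse_rtranclpE)
  then have "w \<in> nbrs V E u" using graph by (auto simp: nbrs_def connected_graph_def)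
  then show ?thesis by auto
qed

lemma moran_step_mono:
  assumes r: "0 < r" and S: "S \<subseteq> V" and fg: "\<And>T. T \<subseteq> V \<Longrightarrow> f T \<le> g T"
  shows "step r f S \<le> step r g S"
proof -
  have weight: "0 \<le> fit r S u / (\<Sum>w\<in>A. fit r S w)" for u A
    using r by (intro divide_nonneg_nonneg sum_nonneg) (auto intro: less_imp_le fit_pos)
  have "f (moran_upd S u v) \<le> g (moran_upd S u v)" if "v \<in> V" for u v
    using that S by (intro fg moran_upd_subset)
  then show ?thesis
    unfolding moran_step_def
    using lam_nonneg lam_le_1 weight
    by (intro add_mono mult_left_mono sum_mono divide_right_mono) (auto simp: nbrs_def)
qed

lemma moran_step_const:
  assumes r: "0 < r"
  shows "step r (\<lambda>_. c) S = c"
proof -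
  have weighted_avg: "(\<Sum>u\<in>N. fit r S u / (\<Sum>w\<in>N. fit r S w) * c) = c"
    if "finite N" "N \<noteq> {}" for N
    using fit_sum_pos[OF r that, of S]
    by (simp add: sum_distrib_right[symmetric] sum_divide_distrib[symmetric])
  have uniform_avg: "(\<Sum>v\<in>N. c / real (card N)) = c" if "finite N" "N \<noteq> {}" for N :: "'a set"
    using that by (simp add: card_gt_0_iff)
  have "(\<Sum>u\<in>V. fit r S u / (\<Sum>w\<in>V. fit r S w) * (\<Sum>v\<in>nbrs V E u. c / real (card (nbrs V E u))))
      = c"
    using uniform_avg[OF finite_nbrs nbrs_nonempty] weighted_avg[OF finite_V V_nonempty]
    by simp
  moreover have "(\<Sum>v\<in>V. 1 / real (card V)
      * (\<Sum>u\<in>nbrs V E v. fit r S u / (\<Sum>w\<in>nbrs V E v. fit r S w) * c)) = c"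
    using weighted_avg[OF finite_nbrs nbrs_nonempty] uniform_avg[OF finite_V V_nonempty]
    by simp
  ultimately show ?thesis
    unfolding moran_step_def by (simp add: algebra_simps)
qed

lemma hit_within_bounds: "0 < r \<Longrightarrow> S \<subseteq> V \<Longrightarrow> hit r n S \<in> {0..1}"
proof (induction n arbitrary: S)
  case 0
  then show ?case by simp
next
  case (Suc n)
  have "step r (\<lambda>_. 0) S \<le> step r (hit r n) S" "step r (hit r n) S \<le> step r (\<lambda>_. 1) S"
    using Suc by (auto intro!: moran_step_mono)
  then show ?case
    using moran_step_const[OF Suc.prems(1)] by simp
qed

lemma incseq_hit_within:
  assumes r: "0 < r" and S: "S \<subseteq> V"
  shows "incseq (\<lambda>n. hit r n S)"
proof -
  have "hit r n S \<le> hit r (Suc n) S" if "S \<subseteq> V" for n S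
    using that
  proof (induction n arbitrary: S)
    case 0
    have "step r (\<lambda>_. 0) S \<le> step r (hit r 0) S"
      using r 0 by (intro moran_step_mono) auto
    then show ?case
      using moran_step_const[OF r] by simp
  next
    case (Suc n)
    have "step r (hit r n) S \<le> step r (hit r (Suc n)) S"
      using r Suc by (intro moran_step_mono) auto
    then show ?case by simp
  qed
  then show ?thesis
    using S by (simp add: incseq_SucI)
qed

lemma hit_within_tendsto_fp:
  assumes r: "0 < r" and S: "S \<subseteq> V"
  shows "(\<lambda>n. hit r n S) \<longlonglongrightarrow> fp V E lam r S"
proof -
  have "\<forall>n. hit r n S \<le> 1"
    using hit_within_bounds[OF r S] by simp
  then obtain L where "(\<lambda>n. hit r n S) \<longlonglongrightarrow> L"
    by (rule incseq_convergent[OF incseq_hit_within[OF r S]])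
  then show ?thesis
    by (simp add: fp_def limI)
qed

lemma neutral_moran_step_mono_set:
  assumes ST: "S \<subseteq> T" "T \<subseteq> V" and g_mono: "\<And>A B. A \<subseteq> B \<Longrightarrow> B \<subseteq> V \<Longrightarrow> g A \<le> g B"
  shows "step 1 g S \<le> step 1 g T"
proof -
  have "g (moran_upd S u v) \<le> g (moran_upd T u v)" if "v \<in> V" for u v
    using that ST by (intro g_mono moran_upd_mono moran_upd_subset) auto
  then show ?thesis
    unfolding moran_step_def fit_neutral
    using lam_nonneg lam_le_1
    by (intro add_mono mult_left_mono sum_mono divide_right_mono) (auto simp: nbrs_def)
qed

lemma neutral_hit_within_mono_set: "S \<subseteq> T \<Longrightarrow> T \<subseteq> V \<Longrightarrow> hit 1 n S \<le> hit 1 n T"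
proof (induction n arbitrary: S T)
  case 0
  then show ?case by auto
next
  case (Suc n)
  show ?case
  proof (cases "T = V")
    case True
    then show ?thesis
      using hit_within_bounds[of 1 S "Suc n"] Suc.prems by auto
  next
    case False
    moreover have "step 1 (hit 1 n) S \<le> step 1 (hit 1 n) T"
      using Suc by (intro neutral_moran_step_mono_set) auto
    ultimately show ?thesis
      using Suc.prems by auto
  qed
qed

lemma moran_step_fitness_compare:
  assumes r: "0 < r" "0 \<le> s * (r - 1)" and S: "S \<subseteq> V"
    and g_mono: "\<And>A B. A \<subseteq> B \<Longrightarrow> B \<subseteq> V \<Longrightarrow> g A \<le> g B"
  shows "0 \<le> s * (step r g S - step 1 g S)"
proof -
  define offspring where
    "offspring u = (\<Sum>v\<in>nbrs V E u. g (moran_upd S u v) / real (card (nbrs V E u)))" for u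
  \<comment> \<open>A mutant parent never shrinks the mutant set and a resident parent never enlarges it,
    so under both update rules the outcome is sorted by the type of the parent.\<close>
  have "offspring w \<le> g S \<and> g S \<le> offspring u" if "u \<in> V \<inter> S" "w \<in> V - S" for u w
    unfolding offspring_def using that S finite_nbrs nbrs_nonempty
    by (intro conjI mean_lower_bound mean_upper_bound) (auto intro!: g_mono simp: moran_upd_def nbrs_def)
  then have birth_death:
    "0 \<le> s * ((\<Sum>u\<in>V. fit r S u / (\<Sum>w\<in>V. fit r S w) * offspring u)
             - (\<Sum>u\<in>V. fit 1 S u / (\<Sum>w\<in>V. fit 1 S w) * offspring u))"
    using finite_V V_nonempty r by (intro fitness_weighted_average_compare) force+
  have death_birth:
    "0 \<le> s * ((\<Sum>u\<in>nbrs V E v. fit r S u / (\<Sum>w\<in>nbrs V E v. fit r S w) * g (moran_upd S u v))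
             - (\<Sum>u\<in>nbrs V E v. fit 1 S u / (\<Sum>w\<in>nbrs V E v. fit 1 S w) * g (moran_upd S u v)))"
    if v: "v \<in> V" for v
    using finite_nbrs nbrs_nonempty[OF v] r v S
    by (intro fitness_weighted_average_compare) (auto intro!: g_mono simp: moran_upd_def)
  define death_birth_gain where
    "death_birth_gain = (\<Sum>v\<in>V. 1 / real (card V) *
       (s * ((\<Sum>u\<in>nbrs V E v. fit r S u / (\<Sum>w\<in>nbrs V E v. fit r S w) * g (moran_upd S u v))
           - (\<Sum>u\<in>nbrs V E v. fit 1 S u / (\<Sum>w\<in>nbrs V E v. fit 1 S w) * g (moran_upd S u v)))))"
  have "0 \<le> death_birth_gain"
    unfolding death_birth_gain_def using death_birth by (intro sum_nonneg) simp
  moreover have "s * (step r g S - step 1 g S)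
      = lam * (s * ((\<Sum>u\<in>V. fit r S u / (\<Sum>w\<in>V. fit r S w) * offspring u)
                  - (\<Sum>u\<in>V. fit 1 S u / (\<Sum>w\<in>V. fit 1 S w) * offspring u)))
        + (1 - lam) * death_birth_gain"
    unfolding moran_step_def death_birth_gain_def offspring_def
    by (simp add: algebra_simps sum_subtractf sum_distrib_left sum_divide_distrib)
  ultimately show ?thesis
    using birth_death lam_nonneg lam_le_1 by simp
qed

lemma hit_within_fitness_compare:
  assumes r: "0 < r" "0 \<le> s * (r - 1)"
  shows "S \<subseteq> V \<Longrightarrow> 0 \<le> s * (hit r n S - hit 1 n S)"
proof (induction n arbitrary: S)
  case 0
  show ?case by simp
next
  case (Suc n)
  have "step r (\<lambda>_. 0) S \<le> step r (\<lambda>T. s * (hit r n T - hit 1 n T)) S"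
    using r(1) Suc by (intro moran_step_mono) auto
  then have "0 \<le> s * (step r (hit r n) S - step r (hit 1 n) S)"
    by (simp add: moran_step_const[OF r(1)] moran_step_scaled_diff)
  moreover have "0 \<le> s * (step r (hit 1 n) S - step 1 (hit 1 n) S)"
    using r Suc.prems by (intro moran_step_fitness_compare neutral_hit_within_mono_set)
  ultimately show ?case
    by (simp add: right_diff_distrib)
qed

end

theorem mainTheorem2:
  fixes V :: "'a set" and E :: "'a \<Rightarrow> 'a \<Rightarrow> bool" and lam r :: real and S :: "'a set"
  assumes "connected_graph V E" and "0 \<le> lam" and "lam \<le> 1" and "r > 0" and "S \<subseteq> V"
  shows "(r \<ge> 1 \<longrightarrow> fp V E lam r S \<ge> fp V E lam 1 S)
       \<and> (r \<le> 1 \<longrightarrow> fp V E lam r S \<le> fp V E lam 1 S)"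
proof -
  interpret mixed_moran V E lam
    using assms(1-3) by unfold_locales
  have to_r: "(\<lambda>n. hit r n S) \<longlonglongrightarrow> fp V E lam r S"
    using assms(4,5) by (rule hit_within_tendsto_fp)
  have to_1: "(\<lambda>n. hit 1 n S) \<longlonglongrightarrow> fp V E lam 1 S"
    using assms(5) by (intro hit_within_tendsto_fp) simp_all
  show ?thesis
  proof (intro conjI impI)
    assume "1 \<le> r"
    then have "hit 1 n S \<le> hit r n S" for n
      using hit_within_fitness_compare[OF assms(4), of 1 S n] assms(5) by simp
    then show "fp V E lam 1 S \<le> fp V E lam r S"
      by (intro LIMSEQ_le[OF to_1 to_r]) auto
  next
    assume "r \<le> 1"
    then have "hit r n S \<le> hit 1 n S" for n
      using hit_within_fitness_compare[OF assms(4), of "-1" S n] assms(5) by simp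
    then show "fp V E lam r S \<le> fp V E lam 1 S"
      by (intro LIMSEQ_le[OF to_r to_1]) auto
  qed
qed

end
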